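(* Let $\lambda\in\mathbb{C}$, $\mu\ge0$, and let $f\in\mathcal{R}$ with $f(z)=z+\sum_{n=2}^\infty a_nz^n$. Define $F_{\lambda,\mu}(f)=|a_3-\lambda a_2^2|-\mu|a_2|$. Then \[ F_{\lambda,\mu}(f)\le\begin{cases}\dfrac13\big(|2-3\lambda|-3\mu\big), & |2-3\lambda|\ge2+3\mu,\\[2mm] \dfrac23, & |2-3\lambda|<2+3\mu,\end{cases} \] and \[ F_{\lambda,\mu}(f)\ge\begin{cases}-\dfrac13\big(3\mu-|2-3\lambda|\big), & |2-3\lambda|\le\dfrac{3\mu-4}{2},\\[2mm] -\mu\sqrt{\dfrac{2}{|2-3\lambda|+2}}, & |2-3\lambda|\ge\dfrac{9\mu^2-16}{8},\\[2mm] -\dfrac1{12}\left(8+\dfrac{9\mu^2}{|2-3\lambda|+2}\right), & \dfrac{3\mu-4}{2}<|2-3\lambda|<\dfrac{9\mu^2-16}{8}.\end{cases} \] All inequalities are sharp (each bound is attained by some $f\in\mathcal{R}$).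
   Context: $\mathbb{D}$ is the open unit disk; $\mathcal{A}$ is the class of holomorphic $f$ on $\mathbb{D}$ with $f(0)=0$, $f'(0)=1$; $\mathcal{R}=\{f\in\mathcal{A}:\operatorname{Re} f'(z)>0\ \forall z\in\mathbb{D}\}$ (functions of bounded turning). *)

theory Defs
  imports "HOL-Complex_Analysis.Complex_Analysis"
begin

definition bounded_turning :: "(complex \<Rightarrow> complex) set" where
  "bounded_turning = {f. f holomorphic_on ball 0 1 \<and> f 0 = 0 \<and> deriv f 0 = 1 \<and>
      (\<forall>z\<in>ball 0 1. Re (deriv f z) > 0)}"

definition tcoeff :: "(complex \<Rightarrow> complex) \<Rightarrow> nat \<Rightarrow> complex" where
  "tcoeff f n = (deriv ^^ n) f 0 / of_nat (fact n)"

definition Ffun :: "complex \<Rightarrow> real \<Rightarrow> (complex \<Rightarrow> complex) \<Rightarrow> real" where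
  "Ffun lam mu f = cmod (tcoeff f 3 - lam * (tcoeff f 2)^2) - mu * cmod (tcoeff f 2)"

end

(*
  The Cayley transform w = (f' - 1)/(f' + 1) of a function f of bounded turning maps the
  disc into itself and fixes 0, so w(z) = z g(z) with |g| <= 1, i.e. f' = (1 + z g)/(1 - z g).
  Differentiating gives a_2 = g(0) and a_3 = 2/3 (g'(0) + g(0)^2), and the Schwarz-Pick
  inequality |g'(0)| <= 1 - |g(0)|^2 is the only constraint: Moebius maps realise every
  admissible pair.  With r = |a_2| and A = |2 - 3 lambda| the triangle inequality then
  confines F to the interval between max(0, (A + 2) r^2 - 2)/3 - mu r and
  ((A - 2) r^2 + 2)/3 - mu r, both ends being attained, so the five bounds are the extrema
  of these two envelopes over 0 <= r <= 1.
*)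
theory Submission
  imports Defs
begin

lemma deriv_cong_open:
  assumes "open S" "x \<in> S" "\<And>z. z \<in> S \<Longrightarrow> F z = G z"
  shows "deriv F x = deriv G x"
  using eventually_nhds_in_open[OF assms(1,2)] assms(3)
  by (intro deriv_cong_ev) (auto elim: eventually_mono)

lemma norm_mult_less_1:
  assumes "cmod z < 1" "cmod w \<le> 1"
  shows "cmod (z * w) < 1"
proof -
  have "cmod z * cmod w \<le> cmod z"
    using assms by (simp add: mult_left_le)
  then show ?thesis
    using assms by (simp add: norm_mult)
qed

lemma one_minus_neq_0_if_norm_less_1: "cmod (u::complex) < 1 \<Longrightarrow> 1 - u \<noteq> 0"
  by auto

lemma Re_Cayley_pos:
  assumes "cmod u < 1"
  shows "0 < Re ((1 + u) / (1 - u))"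
proof -
  have "Re ((1 + u) / (1 - u)) = (1 - (cmod u)\<^sup>2) / (cmod (1 - u))\<^sup>2"
    unfolding Re_divide cmod_power2 by (simp add: power2_eq_square algebra_simps)
  moreover have "u \<noteq> 1" "(cmod u)\<^sup>2 < 1"
    using assms by (auto simp: power_less_one_iff)
  ultimately show ?thesis by simp
qed

lemma norm_Cayley_inverse_less_1:
  assumes "0 < Re q"
  shows "cmod ((q - 1) / (q + 1)) < 1"
proof -
  have "(cmod (q - 1))\<^sup>2 < (cmod (q + 1))\<^sup>2"
    using assms unfolding cmod_power2 by (simp add: power2_eq_square algebra_simps)
  then have "cmod (q - 1) < cmod (q + 1)"
    by (rule power_less_imp_less_base) simp
  then show ?thesis
    by (simp add: norm_divide divide_less_eq)
qed

lemma Cayley_inverse: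
  assumes "q + 1 \<noteq> (0::complex)"
  shows "(1 + (q - 1) / (q + 1)) / (1 - (q - 1) / (q + 1)) = q"
proof -
  have "1 + (q - 1) / (q + 1) = 2 * q / (q + 1)" "1 - (q - 1) / (q + 1) = 2 / (q + 1)"
    using assms by (simp_all add: field_simps)
  then show ?thesis
    using assms by simp
qed

lemma Schwarz_Pick_deriv_0:
  assumes g: "g holomorphic_on ball 0 1" and lt: "\<And>z. z \<in> ball 0 1 \<Longrightarrow> cmod (g z) < 1"
  shows "cmod (deriv g 0) \<le> 1 - (cmod (g 0))\<^sup>2"
proof -
  define a where "a = g 0"
  have a: "cmod a < 1"
    using lt[of 0] by (simp add: a_def)
  have den: "1 - cnj a * g z \<noteq> 0" if "z \<in> ball 0 1" for z
    using one_minus_neq_0_if_norm_less_1[OF norm_mult_less_1] a lt[OF that] by simp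
  define h where "h = Moebius_function 0 a \<circ> g"
  have h_eq: "h z = (g z - a) / (1 - cnj a * g z)" for z
    by (simp add: h_def Moebius_function_simple)
  have "h holomorphic_on ball 0 1"
    unfolding h_eq[abs_def] using den by (intro holomorphic_intros g) auto
  moreover have "h 0 = 0"
    by (simp add: h_eq a_def)
  moreover have "cmod (h z) < 1" if "cmod z < 1" for z
    using Moebius_function_norm_lt_1[OF a lt] that by (simp add: h_def)
  ultimately have "cmod (deriv h 0) \<le> 1"
    by (rule Schwarz_Lemma(2)[where \<xi> = 0]) simp_all
  have "1 - cnj a * a \<noteq> 0"
    using den[of 0] by (simp add: a_def)
  then have "(h has_field_derivative deriv g 0 / (1 - cnj a * a)) (at 0)"
    unfolding h_eq[abs_def]
    by (auto intro!: derivative_eq_intros holomorphic_derivI[OF g] simp: a_def[symmetric] power2_eq_square)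
  moreover have "1 - cnj a * a = of_real (1 - (cmod a)\<^sup>2)"
    by (simp only: complex_norm_square mult.commute of_real_diff of_real_1)
  ultimately have "deriv h 0 = deriv g 0 / of_real (1 - (cmod a)\<^sup>2)"
    by (metis DERIV_imp_deriv)
  moreover have pos: "0 < 1 - (cmod a)\<^sup>2"
    using a by (simp add: power_less_one_iff)
  ultimately have "cmod (deriv h 0) = cmod (deriv g 0) / (1 - (cmod a)\<^sup>2)"
    by (simp only: norm_divide norm_of_real abs_of_pos)
  with \<open>cmod (deriv h 0) \<le> 1\<close> pos show ?thesis
    by (simp add: a_def divide_le_eq)
qed

lemma Schwarz_Pick_deriv_0_le:
  assumes g: "g holomorphic_on ball 0 1" and le: "\<And>z. z \<in> ball 0 1 \<Longrightarrow> cmod (g z) \<le> 1"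
  shows "cmod (deriv g 0) \<le> 1 - (cmod (g 0))\<^sup>2"
proof (cases "\<forall>z\<in>ball 0 1. cmod (g z) < 1")
  case True
  then show ?thesis
    using Schwarz_Pick_deriv_0[OF g] by blast
next
  case False
  then obtain \<xi> where \<xi>: "\<xi> \<in> ball 0 1" "cmod (g \<xi>) = 1"
    using le by (meson le_less)
  then have "g constant_on ball 0 1"
    using le
    by (intro maximum_modulus_principle[OF g open_ball connected_ball open_ball order_refl \<xi>(1)])
       auto
  then obtain c where c: "\<And>z. z \<in> ball 0 1 \<Longrightarrow> g z = c"
    by (auto simp: constant_on_def)
  then have "deriv g 0 = deriv (\<lambda>_. c) 0"
    by (intro deriv_cong_open[where S = "ball 0 1"]) auto
  moreover have "cmod c = 1"
    using c \<xi> by auto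
  ultimately show ?thesis
    using c[of 0] by simp
qed

section \<open>Coefficients of functions of bounded turning\<close>

lemma bounded_turning_imp_Schwarz_quotient:
  assumes "f \<in> bounded_turning"
  obtains g where "g holomorphic_on ball 0 1" "\<And>z. z \<in> ball 0 1 \<Longrightarrow> cmod (g z) \<le> 1"
    "\<And>z. z \<in> ball 0 1 \<Longrightarrow> deriv f z = (1 + z * g z) / (1 - z * g z)"
proof -
  have f: "f holomorphic_on ball 0 1" "deriv f 0 = 1"
    and Re_pos: "\<And>z. z \<in> ball 0 1 \<Longrightarrow> 0 < Re (deriv f z)"
    using assms by (auto simp: bounded_turning_def)
  have nz: "deriv f z + 1 \<noteq> 0" if "z \<in> ball 0 1" for z
    using Re_pos[OF that] by (auto simp: complex_eq_iff)
  define w where "w z = (deriv f z - 1) / (deriv f z + 1)" for z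
  have w: "w holomorphic_on ball 0 1"
    unfolding w_def using nz by (intro holomorphic_intros holomorphic_deriv f(1)) auto
  have "w 0 = 0"
    by (simp add: w_def f(2))
  have w_lt: "cmod (w z) < 1" if "cmod z < 1" for z
    using Re_pos[of z] that by (simp add: w_def norm_Cayley_inverse_less_1)
  obtain g where g: "g holomorphic_on ball 0 1" and wg: "\<And>z. cmod z < 1 \<Longrightarrow> w z = z * g z"
    and "deriv w 0 = g 0"
    using Schwarz3[OF w \<open>w 0 = 0\<close>] by metis
  show ?thesis
  proof
    show "g holomorphic_on ball 0 1" by (fact g)
  next
    fix z :: complex assume z: "z \<in> ball 0 1"
    show "cmod (g z) \<le> 1"
    proof (cases "z = 0")
      case True
      then show ?thesis
        using Schwarz_Lemma(2)[OF w \<open>w 0 = 0\<close> w_lt, of 0] \<open>deriv w 0 = g 0\<close> by simp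
    next
      case False
      then show ?thesis
        using Schwarz_Lemma(1)[OF w \<open>w 0 = 0\<close> w_lt, of z] wg[of z] z by (simp add: norm_mult)
    qed
    show "deriv f z = (1 + z * g z) / (1 - z * g z)"
      using Cayley_inverse[OF nz[OF z]] wg[of z] z by (simp add: w_def)
  qed
qed

lemma Schwarz_quotient_imp_bounded_turning:
  assumes g: "g holomorphic_on ball 0 1" and g_le: "\<And>z. z \<in> ball 0 1 \<Longrightarrow> cmod (g z) \<le> 1"
  obtains f where "f \<in> bounded_turning"
    "\<And>z. z \<in> ball 0 1 \<Longrightarrow> deriv f z = (1 + z * g z) / (1 - z * g z)"
proof -
  define p where "p z = (1 + z * g z) / (1 - z * g z)" for z
  have "p holomorphic_on ball 0 1"
    unfolding p_def using norm_mult_less_1 one_minus_neq_0_if_norm_less_1 g_le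
    by (intro holomorphic_intros g) auto
  then obtain F where F: "\<And>z. z \<in> ball 0 1 \<Longrightarrow> (F has_field_derivative p z) (at z within ball 0 1)"
    using holomorphic_convex_primitive'[OF convex_ball open_ball] by blast
  define f where "f z = F z - F 0" for z
  have df: "(f has_field_derivative p z) (at z)" if "z \<in> ball 0 1" for z
    using F[OF that] unfolding f_def at_within_open[OF that open_ball]
    by (auto intro!: derivative_eq_intros)
  have "f \<in> bounded_turning"
    unfolding bounded_turning_def
  proof (intro CollectI conjI ballI)
    show "f holomorphic_on ball 0 1"
      using df holomorphic_on_open field_differentiable_def by blast
    show "f 0 = 0" "deriv f 0 = 1"
      using DERIV_imp_deriv[OF df[of 0]] by (simp_all add: f_def p_def)
    fix z :: complex assume z: "z \<in> ball 0 1"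
    have "cmod (z * g z) < 1"
      using z g_le[OF z] by (simp add: norm_mult_less_1)
    then show "0 < Re (deriv f z)"
      using DERIV_imp_deriv[OF df[OF z]] Re_Cayley_pos by (simp add: p_def)
  qed
  moreover have "\<And>z. z \<in> ball 0 1 \<Longrightarrow> deriv f z = p z"
    using df DERIV_imp_deriv by blast
  ultimately show ?thesis
    using that by (simp add: p_def)
qed

lemma tcoeff_Schwarz_quotient:
  assumes g: "g holomorphic_on ball 0 1" and g_le: "\<And>z. z \<in> ball 0 1 \<Longrightarrow> cmod (g z) \<le> 1"
    and f': "\<And>z. z \<in> ball 0 1 \<Longrightarrow> deriv f z = (1 + z * g z) / (1 - z * g z)"
  shows "tcoeff f 2 = g 0" "tcoeff f 3 = 2/3 * (deriv g 0 + (g 0)\<^sup>2)"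
proof -
  have nz: "1 - z * g z \<noteq> 0" if "z \<in> ball 0 1" for z
    using one_minus_neq_0_if_norm_less_1[OF norm_mult_less_1] that g_le[OF that] by simp
  have g': "deriv g holomorphic_on ball 0 1"
    by (rule holomorphic_deriv[OF g open_ball])
  have f'': "deriv (deriv f) z = 2 * (g z + z * deriv g z) / (1 - z * g z)\<^sup>2"
    if z: "z \<in> ball 0 1" for z
  proof -
    have "deriv (deriv f) z = deriv (\<lambda>z. (1 + z * g z) / (1 - z * g z)) z"
      using f' z by (intro deriv_cong_open[where S = "ball 0 1"]) auto
    also have "\<dots> = 2 * (g z + z * deriv g z) / (1 - z * g z)\<^sup>2"
      using nz[OF z]
      by (intro DERIV_imp_deriv)
         (auto intro!: derivative_eq_intros holomorphic_derivI[OF g open_ball z]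
               simp: field_simps power2_eq_square)
    finally show ?thesis .
  qed
  have "deriv (deriv (deriv f)) 0 = deriv (\<lambda>z. 2 * (g z + z * deriv g z) / (1 - z * g z)\<^sup>2) 0"
    using f'' by (intro deriv_cong_open[where S = "ball 0 1"]) auto
  also have "\<dots> = 4 * deriv g 0 + 4 * (g 0)\<^sup>2"
    by (intro DERIV_imp_deriv)
       (auto intro!: derivative_eq_intros holomorphic_derivI[OF g open_ball]
             holomorphic_derivI[OF g' open_ball] simp: field_simps power2_eq_square)
  finally have "deriv (deriv (deriv f)) 0 = 4 * deriv g 0 + 4 * (g 0)\<^sup>2" .
  moreover have "deriv (deriv f) 0 = 2 * g 0"
    using f''[of 0] by simp
  ultimately show "tcoeff f 2 = g 0" "tcoeff f 3 = 2/3 * (deriv g 0 + (g 0)\<^sup>2)"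
    by (simp_all add: tcoeff_def numeral_2_eq_2 numeral_3_eq_3 fact_numeral)
qed

lemma bounded_turning_coeffs:
  assumes "f \<in> bounded_turning"
  obtains c where "cmod c \<le> 1 - (cmod (tcoeff f 2))\<^sup>2" "tcoeff f 3 = 2/3 * (c + (tcoeff f 2)\<^sup>2)"
proof -
  obtain g where g: "g holomorphic_on ball 0 1" "\<And>z. z \<in> ball 0 1 \<Longrightarrow> cmod (g z) \<le> 1"
    "\<And>z. z \<in> ball 0 1 \<Longrightarrow> deriv f z = (1 + z * g z) / (1 - z * g z)"
    using bounded_turning_imp_Schwarz_quotient[OF assms] by blast
  show ?thesis
    using that[of "deriv g 0"] Schwarz_Pick_deriv_0_le[OF g(1,2)] tcoeff_Schwarz_quotient[OF g]
    by simp
qed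

lemma norm_Moebius_numerator_le_denominator:
  assumes "cmod a \<le> 1" "cmod u < 1"
  shows "cmod (u + a) \<le> cmod (1 + cnj a * u)"
proof -
  have "(cmod (1 + cnj a * u))\<^sup>2 - (cmod (u + a))\<^sup>2 = (1 - (cmod u)\<^sup>2) * (1 - (cmod a)\<^sup>2)"
    unfolding cmod_power2 by (simp add: power2_eq_square algebra_simps)
  also have "\<dots> \<ge> 0"
    using assms by (simp add: power_le_one)
  finally have "(cmod (u + a))\<^sup>2 \<le> (cmod (1 + cnj a * u))\<^sup>2"
    by simp
  then show ?thesis
    by (rule power2_le_imp_le) simp
qed

lemma bounded_turning_coeffs_attained:
  fixes a c :: complex
  assumes a: "cmod a \<le> 1" and c: "cmod c \<le> 1"
  obtains f where "f \<in> bounded_turning" "tcoeff f 2 = a"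
    "tcoeff f 3 = 2/3 * ((1 - (cmod a)\<^sup>2) * c + a\<^sup>2)"
proof -
  have cz: "cmod (c * z) < 1" if "z \<in> ball 0 1" for z
    using norm_mult_less_1[of z c] that c by (simp add: mult.commute)
  have den: "1 + cnj a * c * z \<noteq> 0" if "z \<in> ball 0 1" for z
    using one_minus_neq_0_if_norm_less_1[OF norm_mult_less_1[OF cz[OF that], of "- cnj a"]] a
    by (simp add: algebra_simps)
  \<comment> \<open>a disc automorphism after \<open>z \<mapsto> c z\<close>, so that \<open>g 0 = a\<close> and
    \<open>g' 0 = (1 - |a|^2) c\<close>\<close>
  define g where "g z = (c * z + a) / (1 + cnj a * c * z)" for z
  have g: "g holomorphic_on ball 0 1"
    unfolding g_def using den by (intro holomorphic_intros) auto
  have g_le: "cmod (g z) \<le> 1" if "z \<in> ball 0 1" for z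
    using norm_Moebius_numerator_le_denominator[OF a cz[OF that]] den[OF that]
    by (simp add: g_def norm_divide divide_le_eq mult.assoc)
  have "(g has_field_derivative c - cnj a * a * c) (at 0)"
    unfolding g_def by (auto intro!: derivative_eq_intros simp: algebra_simps)
  moreover have "cnj a * a = of_real ((cmod a)\<^sup>2)"
    by (simp only: complex_norm_square mult.commute)
  ultimately have dg: "deriv g 0 = (1 - (cmod a)\<^sup>2) * c"
    by (metis DERIV_imp_deriv mult.commute mult_1 left_diff_distrib of_real_1 of_real_diff)
  obtain f where f: "f \<in> bounded_turning"
    and f': "\<And>z. z \<in> ball 0 1 \<Longrightarrow> deriv f z = (1 + z * g z) / (1 - z * g z)"
    using Schwarz_quotient_imp_bounded_turning[OF g g_le] by blast
  have "g 0 = a"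
    by (simp add: g_def)
  with tcoeff_Schwarz_quotient[OF g g_le f'] dg show ?thesis
    using that[OF f] by simp
qed

section \<open>Extremal values of the functional\<close>

text \<open>Here \<open>A\<close> stands for \<open>|2 - 3 lam|\<close> and \<open>r\<close> for \<open>|a_2|\<close>.\<close>

definition Ffun_upper_envelope :: "real \<Rightarrow> real \<Rightarrow> real \<Rightarrow> real" where
  "Ffun_upper_envelope A mu r = ((A - 2) * r\<^sup>2 + 2) / 3 - mu * r"

definition Ffun_lower_envelope :: "real \<Rightarrow> real \<Rightarrow> real \<Rightarrow> real" where
  "Ffun_lower_envelope A mu r = max 0 ((A + 2) * r\<^sup>2 - 2) / 3 - mu * r"

lemma Ffun_between_envelopes:
  assumes "f \<in> bounded_turning"
  obtains r where "0 \<le> r" "r \<le> 1"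
    "Ffun_lower_envelope (cmod (2 - 3*lam)) mu r \<le> Ffun lam mu f"
    "Ffun lam mu f \<le> Ffun_upper_envelope (cmod (2 - 3*lam)) mu r"
proof -
  obtain c where c: "cmod c \<le> 1 - (cmod (tcoeff f 2))\<^sup>2"
    and a3: "tcoeff f 3 = 2/3 * (c + (tcoeff f 2)\<^sup>2)"
    using bounded_turning_coeffs[OF assms] by blast
  define r where "r = cmod (tcoeff f 2)"
  define A where "A = cmod (2 - 3*lam)"
  define X where "X = 2/3 * c"
  define Y where "Y = (2 - 3*lam) / 3 * (tcoeff f 2)\<^sup>2"
  have F: "Ffun lam mu f = cmod (X + Y) - mu * r"
    unfolding Ffun_def a3 X_def Y_def r_def by (simp add: field_simps)
  have X: "cmod X \<le> 2/3 * (1 - r\<^sup>2)" and Y: "cmod Y = A * r\<^sup>2 / 3"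
    using c by (simp_all add: X_def Y_def A_def r_def norm_mult norm_divide norm_power)
  have "r\<^sup>2 \<le> 1"
    using c norm_ge_zero[of c] unfolding r_def by linarith
  then have "r \<le> 1"
    by (simp add: power_le_one_iff abs_square_le_1)
  moreover have "Ffun_lower_envelope A mu r \<le> Ffun lam mu f"
  proof -
    have "max 0 ((A + 2) * r\<^sup>2 - 2) / 3 \<le> max 0 (cmod Y - cmod X)"
      using X Y by (simp add: max_def field_simps)
    also have "\<dots> \<le> cmod (X + Y)"
      using norm_diff_ineq[of Y X] by (simp add: add.commute)
    finally show ?thesis
      using F by (simp add: Ffun_lower_envelope_def)
  qed
  moreover have "Ffun lam mu f \<le> Ffun_upper_envelope A mu r"
    using F X Y norm_triangle_ineq[of X Y]
    by (simp add: Ffun_upper_envelope_def field_simps)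
  ultimately show ?thesis
    using that[of r] by (simp add: A_def r_def)
qed

lemma Ffun_attains:
  assumes "0 \<le> r" "r \<le> 1" "\<bar>t\<bar> \<le> 1"
  shows "\<exists>f\<in>bounded_turning.
    Ffun lam mu f = \<bar>2 * t * (1 - r\<^sup>2) + cmod (2 - 3*lam) * r\<^sup>2\<bar> / 3 - mu * r"
proof -
  define A where "A = cmod (2 - 3*lam)"
  \<comment> \<open>with \<open>a_2 = r\<close> and \<open>c = t u\<close> both terms of \<open>a_3 - lam a_2^2\<close> point in the
    direction \<open>u\<close>\<close>
  obtain u where u: "cmod u = 1" "2 - 3*lam = of_real A * u"
  proof (cases "2 - 3*lam = 0")
    case True
    then show ?thesis
      using that[of 1] by (simp add: A_def)
  next
    case False
    then show ?thesis
      using that[of "(2 - 3*lam) / of_real A"] by (simp add: A_def norm_divide)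
  qed
  obtain f where f: "f \<in> bounded_turning" and a2: "tcoeff f 2 = of_real r"
    and a3: "tcoeff f 3 = 2/3 * ((1 - r\<^sup>2) * (of_real t * u) + (of_real r)\<^sup>2)"
    using bounded_turning_coeffs_attained[of "of_real r" "of_real t * u"] assms u(1)
    by (auto simp: norm_mult)
  define x where "x = 2 * t * (1 - r\<^sup>2) + A * r\<^sup>2"
  have "tcoeff f 3 - lam * (tcoeff f 2)\<^sup>2 = u * of_real x / 3"
  proof -
    have lam: "lam = (2 - of_real A * u) / 3"
      using u(2) by (simp add: field_simps)
    show ?thesis
      unfolding a2 a3 lam x_def by (simp add: field_simps power2_eq_square)
  qed
  then have "Ffun lam mu f = \<bar>x\<bar> / 3 - mu * r"
    unfolding Ffun_def using assms u(1) by (simp only: a2 norm_mult norm_divide norm_of_real) simp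
  then show ?thesis
    using f by (auto simp: A_def x_def)
qed

lemma Ffun_attains_upper_envelope:
  assumes "0 \<le> r" "r \<le> 1"
  shows "\<exists>f\<in>bounded_turning. Ffun lam mu f = Ffun_upper_envelope (cmod (2 - 3*lam)) mu r"
proof -
  have "r\<^sup>2 \<le> 1"
    using assms by (simp add: power_le_one)
  then have "0 \<le> 2 * (1 - r\<^sup>2) + cmod (2 - 3*lam) * r\<^sup>2"
    by simp
  then have "\<bar>2 * 1 * (1 - r\<^sup>2) + cmod (2 - 3*lam) * r\<^sup>2\<bar> = (cmod (2 - 3*lam) - 2) * r\<^sup>2 + 2"
    by (simp add: algebra_simps)
  then show ?thesis
    using Ffun_attains[OF assms, of 1 lam mu] by (simp add: Ffun_upper_envelope_def)
qed

lemma Ffun_attains_lower_envelope: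
  assumes "0 \<le> r" "r \<le> 1"
  shows "\<exists>f\<in>bounded_turning. Ffun lam mu f = Ffun_lower_envelope (cmod (2 - 3*lam)) mu r"
proof -
  define A where "A = cmod (2 - 3*lam)"
  consider "2 \<le> (A + 2) * r\<^sup>2" | "(A + 2) * r\<^sup>2 < 2"
    by linarith
  then obtain t where "\<bar>t\<bar> \<le> 1" "\<bar>2 * t * (1 - r\<^sup>2) + A * r\<^sup>2\<bar> = max 0 ((A + 2) * r\<^sup>2 - 2)"
  proof cases
    case 1
    then show ?thesis
      using that[of "-1"] by (simp add: algebra_simps)
  next
    case 2
    have "0 \<le> A"
      by (simp add: A_def)
    then have "0 \<le> A * r\<^sup>2"
      by simp
    with 2 have "A * r\<^sup>2 \<le> 2 * (1 - r\<^sup>2)" "r\<^sup>2 < 1"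
      by (simp_all add: algebra_simps)
    \<comment> \<open>the modulus can be made to vanish\<close>
    with 2 \<open>0 \<le> A\<close> show ?thesis
      using that[of "- A * r\<^sup>2 / (2 * (1 - r\<^sup>2))"] by (simp add: abs_le_iff field_simps)
  qed
  then show ?thesis
    using Ffun_attains[OF assms, of t lam mu] by (simp add: Ffun_lower_envelope_def A_def)
qed

lemma Ffun_sharp_upper_bound:
  assumes "0 \<le> r0" "r0 \<le> 1" "Ffun_upper_envelope (cmod (2 - 3*lam)) mu r0 = M"
    and max: "\<And>r. 0 \<le> r \<Longrightarrow> r \<le> 1 \<Longrightarrow> Ffun_upper_envelope (cmod (2 - 3*lam)) mu r \<le> M"
  shows "(\<forall>f\<in>bounded_turning. Ffun lam mu f \<le> M) \<and> (\<exists>f\<in>bounded_turning. Ffun lam mu f = M)"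
proof
  show "\<forall>f\<in>bounded_turning. Ffun lam mu f \<le> M"
  proof
    fix f assume "f \<in> bounded_turning"
    then obtain r where "0 \<le> r" "r \<le> 1" "Ffun lam mu f \<le> Ffun_upper_envelope (cmod (2 - 3*lam)) mu r"
      using Ffun_between_envelopes by blast
    with max show "Ffun lam mu f \<le> M"
      by force
  qed
  show "\<exists>f\<in>bounded_turning. Ffun lam mu f = M"
    using Ffun_attains_upper_envelope[OF assms(1,2), of lam mu] assms(3) by simp
qed

lemma Ffun_sharp_lower_bound:
  assumes "0 \<le> r0" "r0 \<le> 1" "Ffun_lower_envelope (cmod (2 - 3*lam)) mu r0 = M"
    and min: "\<And>r. 0 \<le> r \<Longrightarrow> r \<le> 1 \<Longrightarrow> M \<le> Ffun_lower_envelope (cmod (2 - 3*lam)) mu r"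
  shows "(\<forall>f\<in>bounded_turning. M \<le> Ffun lam mu f) \<and> (\<exists>f\<in>bounded_turning. Ffun lam mu f = M)"
proof
  show "\<forall>f\<in>bounded_turning. M \<le> Ffun lam mu f"
  proof
    fix f assume "f \<in> bounded_turning"
    then obtain r where "0 \<le> r" "r \<le> 1" "Ffun_lower_envelope (cmod (2 - 3*lam)) mu r \<le> Ffun lam mu f"
      using Ffun_between_envelopes by blast
    with min show "M \<le> Ffun lam mu f"
      by force
  qed
  show "\<exists>f\<in>bounded_turning. Ffun lam mu f = M"
    using Ffun_attains_lower_envelope[OF assms(1,2), of lam mu] assms(3) by simp
qed

lemma Ffun_upper_envelope_le_at_1:
  assumes "0 \<le> mu" "2 + 3*mu \<le> A" "0 \<le> r" "r \<le> 1"
  shows "Ffun_upper_envelope A mu r \<le> (A - 3*mu) / 3"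
proof -
  have "(A - 2) * 1 \<le> (A - 2) * (1 + r)"
    using assms by (intro mult_left_mono) auto
  then have "0 \<le> (1 - r) * ((A - 2) * (1 + r) - 3*mu)"
    using assms by (intro mult_nonneg_nonneg) auto
  then show ?thesis
    by (simp add: Ffun_upper_envelope_def field_simps power2_eq_square)
qed

lemma Ffun_upper_envelope_le_at_0:
  assumes "0 \<le> mu" "A < 2 + 3*mu" "0 \<le> r" "r \<le> 1"
  shows "Ffun_upper_envelope A mu r \<le> 2/3"
proof -
  have "(A - 2) * r \<le> 3*mu"
  proof (cases "A \<le> 2")
    case True
    then show ?thesis
      using assms mult_nonpos_nonneg[of "A - 2" r] by auto
  next
    case False
    then have "(A - 2) * r \<le> (A - 2) * 1"
      using assms by (intro mult_left_mono) auto
    then show ?thesis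
      using assms by simp
  qed
  then have "0 \<le> r * (3*mu - (A - 2) * r)"
    using assms by simp
  then show ?thesis
    by (simp add: Ffun_upper_envelope_def field_simps power2_eq_square)
qed

lemma Ffun_lower_envelope_ge_quadratic: "((A + 2) * r\<^sup>2 - 2) / 3 - mu * r \<le> Ffun_lower_envelope A mu r"
  unfolding Ffun_lower_envelope_def by (intro diff_right_mono divide_right_mono) auto

lemma Ffun_lower_envelope_ge_linear: "- mu * r \<le> Ffun_lower_envelope A mu r"
  unfolding Ffun_lower_envelope_def by simp

lemma Ffun_lower_envelope_ge_at_1:
  assumes "0 \<le> A" "A \<le> (3*mu - 4) / 2" "0 \<le> r" "r \<le> 1"
  shows "- (3*mu - A) / 3 \<le> Ffun_lower_envelope A mu r"
proof -
  have "(A + 2) * (1 + r) \<le> (A + 2) * 2"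
    using assms by (intro mult_left_mono) auto
  then have "0 \<le> (1 - r) * (3*mu - (A + 2) * (1 + r))"
    using assms by (intro mult_nonneg_nonneg) auto
  then have "- (3*mu - A) / 3 \<le> ((A + 2) * r\<^sup>2 - 2) / 3 - mu * r"
    by (simp add: field_simps power2_eq_square)
  then show ?thesis
    using Ffun_lower_envelope_ge_quadratic[of A r mu] by linarith
qed

lemma Ffun_lower_envelope_ge_at_kink:
  assumes "0 \<le> A" "0 \<le> mu" "(9*mu\<^sup>2 - 16) / 8 \<le> A" "0 \<le> r"
  shows "- mu * sqrt (2 / (A + 2)) \<le> Ffun_lower_envelope A mu r"
proof -
  define r0 where "r0 = sqrt (2 / (A + 2))"
  have "0 \<le> r0" "r0\<^sup>2 = 2 / (A + 2)"
    using assms(1) by (simp_all add: r0_def)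
  then have r0_sq: "(A + 2) * r0\<^sup>2 = 2"
    using assms(1) by (simp add: field_simps)
  have "(3*mu)\<^sup>2 \<le> 8 * (A + 2)"
    using assms(3) by (simp add: power_mult_distrib)
  also have "\<dots> = 4 * (A + 2) * ((A + 2) * r0\<^sup>2)"
    using r0_sq by simp
  also have "\<dots> = (2 * (A + 2) * r0)\<^sup>2"
    by (simp add: power2_eq_square algebra_simps)
  finally have "(3*mu)\<^sup>2 \<le> (2 * (A + 2) * r0)\<^sup>2" .
  then have key: "3*mu \<le> 2 * (A + 2) * r0"
    by (rule power2_le_imp_le) (use \<open>0 \<le> r0\<close> assms(1) in simp)
  show ?thesis
  proof (cases "r \<le> r0")
    case True
    then have "- mu * r0 \<le> - mu * r"
      using assms(2) by (simp add: mult_left_mono)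
    then show ?thesis
      using Ffun_lower_envelope_ge_linear[of mu r A] by (simp add: r0_def)
  next
    case False
    have "(A + 2) * (2 * r0) \<le> (A + 2) * (r + r0)"
      using False assms(1) by (intro mult_left_mono) auto
    with key False have "0 \<le> (r - r0) * ((A + 2) * (r + r0) - 3*mu)"
      by (intro mult_nonneg_nonneg) (auto simp: algebra_simps)
    then have "- mu * r0 \<le> ((A + 2) * r\<^sup>2 - 2) / 3 - mu * r"
      using r0_sq by (simp add: field_simps power2_eq_square)
    then show ?thesis
      using Ffun_lower_envelope_ge_quadratic[of A r mu] by (simp add: r0_def)
  qed
qed

lemma Ffun_lower_envelope_ge_at_vertex:
  assumes "0 \<le> A"
  shows "- (8 + 9*mu\<^sup>2 / (A + 2)) / 12 \<le> Ffun_lower_envelope A mu r"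
proof -
  have "((A + 2) * r\<^sup>2 - 2) / 3 - mu * r + (8 + 9*mu\<^sup>2 / (A + 2)) / 12
      = (2 * (A + 2) * r - 3*mu)\<^sup>2 / (12 * (A + 2))"
    using assms by (simp add: field_simps power2_eq_square)
  moreover have "0 \<le> (2 * (A + 2) * r - 3*mu)\<^sup>2 / (12 * (A + 2))"
    using assms by simp
  ultimately show ?thesis
    using Ffun_lower_envelope_ge_quadratic[of A r mu] by linarith
qed

lemma Ffun_sharp_max_of_large_modulus:
  assumes "0 \<le> mu" "2 + 3*mu \<le> cmod (2 - 3*lam)"
  shows "(\<forall>f\<in>bounded_turning. Ffun lam mu f \<le> (cmod (2 - 3*lam) - 3*mu) / 3) \<and>
    (\<exists>f\<in>bounded_turning. Ffun lam mu f = (cmod (2 - 3*lam) - 3*mu) / 3)"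
  using assms
  by (intro Ffun_sharp_upper_bound[of 1] Ffun_upper_envelope_le_at_1)
     (simp_all add: Ffun_upper_envelope_def diff_divide_distrib)

lemma Ffun_sharp_max_of_small_modulus:
  assumes "0 \<le> mu" "cmod (2 - 3*lam) < 2 + 3*mu"
  shows "(\<forall>f\<in>bounded_turning. Ffun lam mu f \<le> 2/3) \<and> (\<exists>f\<in>bounded_turning. Ffun lam mu f = 2/3)"
  using assms
  by (intro Ffun_sharp_upper_bound[of 0] Ffun_upper_envelope_le_at_0)
     (simp_all add: Ffun_upper_envelope_def)

lemma Ffun_sharp_min_of_small_modulus:
  assumes "cmod (2 - 3*lam) \<le> (3*mu - 4) / 2"
  shows "(\<forall>f\<in>bounded_turning. Ffun lam mu f \<ge> - (3*mu - cmod (2 - 3*lam)) / 3) \<and>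
    (\<exists>f\<in>bounded_turning. Ffun lam mu f = - (3*mu - cmod (2 - 3*lam)) / 3)"
  using assms
  by (intro Ffun_sharp_lower_bound[of 1] Ffun_lower_envelope_ge_at_1)
     (simp_all add: Ffun_lower_envelope_def field_simps)

lemma Ffun_sharp_min_of_large_modulus:
  assumes "0 \<le> mu" "(9*mu\<^sup>2 - 16) / 8 \<le> cmod (2 - 3*lam)"
  shows "(\<forall>f\<in>bounded_turning. Ffun lam mu f \<ge> - mu * sqrt (2 / (cmod (2 - 3*lam) + 2))) \<and>
    (\<exists>f\<in>bounded_turning. Ffun lam mu f = - mu * sqrt (2 / (cmod (2 - 3*lam) + 2)))"
proof (rule Ffun_sharp_lower_bound)
  define A where "A = cmod (2 - 3*lam)"
  have "0 \<le> A" "A + 2 \<noteq> 0"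
    by (simp_all add: A_def add_nonneg_eq_0_iff)
  then have "sqrt (2 / (A + 2)) \<le> 1" "(A + 2) * (sqrt (2 / (A + 2)))\<^sup>2 = 2"
    by (simp_all add: field_simps)
  then show "0 \<le> sqrt (2 / (cmod (2 - 3*lam) + 2))" "sqrt (2 / (cmod (2 - 3*lam) + 2)) \<le> 1"
    "Ffun_lower_envelope (cmod (2 - 3*lam)) mu (sqrt (2 / (cmod (2 - 3*lam) + 2)))
      = - mu * sqrt (2 / (cmod (2 - 3*lam) + 2))"
    by (simp_all add: A_def Ffun_lower_envelope_def)
qed (use assms Ffun_lower_envelope_ge_at_kink in simp)

lemma Ffun_sharp_min_of_medium_modulus:
  assumes "0 \<le> mu" "(3*mu - 4) / 2 < cmod (2 - 3*lam)" "cmod (2 - 3*lam) < (9*mu\<^sup>2 - 16) / 8"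
  shows "(\<forall>f\<in>bounded_turning. Ffun lam mu f \<ge> - (8 + 9*mu\<^sup>2 / (cmod (2 - 3*lam) + 2)) / 12) \<and>
    (\<exists>f\<in>bounded_turning. Ffun lam mu f = - (8 + 9*mu\<^sup>2 / (cmod (2 - 3*lam) + 2)) / 12)"
proof (rule Ffun_sharp_lower_bound)
  define B where "B = cmod (2 - 3*lam) + 2"
  define r where "r = 3*mu / (2 * B)"
  have B: "0 < B" "3*mu < 2 * B" "8 * B < 9*mu\<^sup>2"
    using assms by (simp_all add: B_def add_pos_nonneg field_simps)
  then show "0 \<le> r" "r \<le> 1"
    using assms(1) by (simp_all add: r_def field_simps)
  have "B * r\<^sup>2 - 2 = 9*mu\<^sup>2 / (4 * B) - 2"
    using B(1) by (simp add: r_def field_simps power2_eq_square)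
  also have "\<dots> \<ge> 0"
    using B by (simp add: field_simps)
  finally have "Ffun_lower_envelope (B - 2) mu r = (B * r\<^sup>2 - 2) / 3 - mu * r"
    by (simp add: Ffun_lower_envelope_def)
  also have "\<dots> = - (8 + 9*mu\<^sup>2 / B) / 12"
    using B(1) by (simp add: r_def field_simps power2_eq_square)
  finally show "Ffun_lower_envelope (cmod (2 - 3*lam)) mu r = - (8 + 9*mu\<^sup>2 / (cmod (2 - 3*lam) + 2)) / 12"
    by (simp add: B_def)
qed (intro Ffun_lower_envelope_ge_at_vertex norm_ge_zero)

theorem theorem4p1:
  fixes lam :: complex and mu :: real
  assumes "mu \<ge> 0"
  shows
   "(cmod (2 - 3*lam) \<ge> 2 + 3*mu \<longrightarrow>
       (\<forall>f\<in>bounded_turning. Ffun lam mu f \<le> (cmod (2 - 3*lam) - 3*mu) / 3) \<and>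
       (\<exists>f\<in>bounded_turning. Ffun lam mu f = (cmod (2 - 3*lam) - 3*mu) / 3)) \<and>
    (cmod (2 - 3*lam) < 2 + 3*mu \<longrightarrow>
       (\<forall>f\<in>bounded_turning. Ffun lam mu f \<le> 2/3) \<and>
       (\<exists>f\<in>bounded_turning. Ffun lam mu f = 2/3)) \<and>
    (cmod (2 - 3*lam) \<le> (3*mu - 4) / 2 \<longrightarrow>
       (\<forall>f\<in>bounded_turning. Ffun lam mu f \<ge> - (3*mu - cmod (2 - 3*lam)) / 3) \<and>
       (\<exists>f\<in>bounded_turning. Ffun lam mu f = - (3*mu - cmod (2 - 3*lam)) / 3)) \<and>
    (cmod (2 - 3*lam) \<ge> (9*mu^2 - 16) / 8 \<longrightarrow>
       (\<forall>f\<in>bounded_turning. Ffun lam mu f \<ge> - mu * sqrt (2 / (cmod (2 - 3*lam) + 2))) \<and>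
       (\<exists>f\<in>bounded_turning. Ffun lam mu f = - mu * sqrt (2 / (cmod (2 - 3*lam) + 2)))) \<and>
    ((3*mu - 4) / 2 < cmod (2 - 3*lam) \<and> cmod (2 - 3*lam) < (9*mu^2 - 16) / 8 \<longrightarrow>
       (\<forall>f\<in>bounded_turning. Ffun lam mu f \<ge> - (8 + 9*mu^2 / (cmod (2 - 3*lam) + 2)) / 12) \<and>
       (\<exists>f\<in>bounded_turning. Ffun lam mu f = - (8 + 9*mu^2 / (cmod (2 - 3*lam) + 2)) / 12))"
  using Ffun_sharp_max_of_large_modulus[OF assms] Ffun_sharp_max_of_small_modulus[OF assms]
    Ffun_sharp_min_of_small_modulus Ffun_sharp_min_of_large_modulus[OF assms]
    Ffun_sharp_min_of_medium_modulus[OF assms]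
  by blast

end
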